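(* For every integer $n\ge 0$, $$\Phi^{(4)}[aq^n; b; c, c'; x, y] = \sum_{k=0}^n \sum_{i=0}^k \begin{bmatrix} n \\ k \end{bmatrix} \begin{bmatrix} k \\ i \end{bmatrix} \frac{(b; q)_k}{(c; q)_{k-i} (c'; q)_i} q^{2\binom{k}{2}} a^k x^{k-i} y^i\, \Phi^{(4)}[aq^k; bq^k; cq^{k-i}, c'q^i; xq^i, y]$$ and $$\Phi^{(4)}[aq^{-n}; b; c, c'; x, y] = \sum_{k=0}^n \sum_{i=0}^k \begin{bmatrix} n \\ k \end{bmatrix} \begin{bmatrix} k \\ i \end{bmatrix} \frac{(b; q)_k}{(c; q)_{k-i} (c'; q)_i} q^{\binom{k}{2} - nk} (-a)^k x^{k-i} y^i\, \Phi^{(4)}[a; bq^k; cq^{k-i}, c'q^i; xq^i, y].$$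
   Context: Let $q$ be a complex number with $0<|q|<1$. For complex $z$ and integer $m\ge 0$, $(z;q)_m=\prod_{j=0}^{m-1}(1-zq^j)$, with $(z;q)_0=1$. For integers $0\le k\le n$, $\begin{bmatrix} n \\ k \end{bmatrix}=\frac{(q;q)_n}{(q;q)_k(q;q)_{n-k}}$ is the $q$-binomial coefficient. The $q$-Appell function $\Phi^{(4)}$ is $$\Phi^{(4)}[a; b; c, c'; x, y] = \sum_{m, n \geq 0} \frac{(a; q)_{m+n} (b; q)_{m+n}}{(q; q)_m (q; q)_n (c; q)_m (c'; q)_n} x^m y^n.$$ Identities are understood as identities of power series in $x,y$ (formal, or convergent for small $|x|,|y|$), with complex parameters chosen so that no denominator occurring vanishes. *)

theory Defs
  imports Complex_Main "HOL-Computational_Algebra.Formal_Power_Series"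
begin

definition qpoch :: "complex \<Rightarrow> complex \<Rightarrow> nat \<Rightarrow> complex" where
  "qpoch z q m = (\<Prod>j<m. 1 - z * q ^ j)"

text \<open>Gaussian q-binomial coefficient [n choose k]_q (used for 0 \<le> k \<le> n).\<close>
definition qbinom :: "complex \<Rightarrow> nat \<Rightarrow> nat \<Rightarrow> complex" where
  "qbinom q n k = qpoch q q n / (qpoch q q k * qpoch q q (n - k))"

text \<open>Formal power series in two variables x, y: complex fps fps, where the
  outer variable is x and the inner variable is y.\<close>
abbreviation fpsX2 :: "complex fps fps" where "fpsX2 \<equiv> fps_X"
abbreviation fpsY2 :: "complex fps fps" where "fpsY2 \<equiv> fps_const fps_X"
abbreviation fpsC2 :: "complex \<Rightarrow> complex fps fps" where "fpsC2 z \<equiv> fps_const (fps_const z)"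

text \<open>q-Appell function Phi^(4)[a; b; c, c'; u x, v y] as a formal power series
  in x, y (the scalars u, v realise substitutions such as x \<mapsto> x q^i):
  coefficient of x^m y^n is
  (a;q)_{m+n} (b;q)_{m+n} / ((q;q)_m (q;q)_n (c;q)_m (c';q)_n) u^m v^n.\<close>
definition Phi4 :: "complex \<Rightarrow> complex \<Rightarrow> complex \<Rightarrow> complex \<Rightarrow> complex \<Rightarrow> complex \<Rightarrow> complex \<Rightarrow> complex fps fps" where
  "Phi4 q a b c c' u v = Abs_fps (\<lambda>m. Abs_fps (\<lambda>n.
      qpoch a q (m + n) * qpoch b q (m + n)
      / (qpoch q q m * qpoch q q n * qpoch c q m * qpoch c' q n) * u ^ m * v ^ n))"

end

theory Submission
  imports Defs
begin

unbundle fps_syntax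

text \<open>
  Compare coefficients of \<open>x^M y^N\<close> and put \<open>L = M + N\<close>. On the right-hand side the
  factors \<open>(b;q)\<close>, \<open>(c;q)\<close>, \<open>(c';q)\<close> of the shifted Appell functions combine with the
  prefactors into \<open>(b;q)_L / ((c;q)_M (c';q)_N)\<close>, and the inner sum over \<open>i\<close> collapses by
  the q-Vandermonde identity to the Gaussian binomial \<open>[L, k]\<close>. Both identities thereby
  reduce to expansions of a single q-Pochhammer symbol: \<open>(a q^n;q)_L\<close> in terms of the
  \<open>(a q^k;q)_(L-k)\<close>, and \<open>(a;q)_L\<close> in terms of the \<open>(a q^n;q)_(L-k)\<close>, with coefficients
  \<open>[n, k] (q;q)_k [L, k]\<close> times the stated weights. These follow by induction on \<open>n\<close> from
  the contiguous relation \<open>(zq;q)_m = (z;q)_m + z (1 - q^m) (zq;q)_(m-1)\<close> and the q-Pascal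
  recurrences.
\<close>

lemma qpoch_0 [simp]: "qpoch z q 0 = 1"
  by (simp add: qpoch_def)

lemma qpoch_Suc: "qpoch z q (Suc m) = qpoch z q m * (1 - z * q ^ m)"
  by (simp add: qpoch_def)

lemma qpoch_add: "qpoch z q (m + k) = qpoch z q m * qpoch (z * q ^ m) q k"
  by (induction k) (simp_all add: qpoch_Suc power_add mult.assoc)

lemma qpoch_Suc_left: "qpoch z q (Suc m) = (1 - z) * qpoch (z * q) q m"
  using qpoch_add[of z q 1 m] by (simp add: qpoch_def)

lemma qpoch_contiguous:
  "qpoch (z * q) q m = qpoch z q m + z * (1 - q ^ m) * qpoch (z * q) q (m - 1)"
proof (cases m)
  case (Suc r)
  have "qpoch (z * q) q (Suc r) = qpoch (z * q) q r * (1 - z * q * q ^ r)"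
    by (rule qpoch_Suc)
  moreover have "qpoch z q (Suc r) = (1 - z) * qpoch (z * q) q r"
    by (rule qpoch_Suc_left)
  ultimately show ?thesis
    using Suc by (simp add: algebra_simps)
qed simp

lemma qpoch_nonzero:
  assumes "\<And>j. z * q ^ j \<noteq> 1" shows "qpoch z q m \<noteq> 0"
  using assms by (simp add: qpoch_def)

lemma qpoch_shift_nonzero:
  assumes "\<And>m. qpoch z q m \<noteq> 0" shows "qpoch (z * q ^ l) q m \<noteq> 0"
  using assms[of "l + m"] by (simp add: qpoch_add)

lemma qpoch_q_nonzero:
  fixes q :: complex assumes "norm q < 1" shows "qpoch q q m \<noteq> 0"
proof -
  have "norm (q * q ^ j) < 1" for j
    using assms by (simp add: norm_mult norm_power power_less_one_iff flip: power_Suc)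
  then have "q * q ^ j \<noteq> 1" for j
    by (metis norm_one order_less_irrefl)
  then show ?thesis
    by (rule qpoch_nonzero)
qed

definition qfalling :: "complex \<Rightarrow> nat \<Rightarrow> nat \<Rightarrow> complex" where
  "qfalling q n k = (\<Prod>j<k. 1 - q ^ (n - j))"

lemma qfalling_0 [simp]: "qfalling q n 0 = 1"
  by (simp add: qfalling_def)

lemma qfalling_Suc: "qfalling q n (Suc k) = qfalling q n k * (1 - q ^ (n - k))"
  by (simp add: qfalling_def)

lemma qfalling_eq_0: "n < k \<Longrightarrow> qfalling q n k = 0"
  unfolding qfalling_def by (rule prod_zero) (auto intro!: bexI[of _ n])

lemma qfalling_Suc_Suc: "qfalling q (Suc n) (Suc k) = (1 - q ^ Suc n) * qfalling q n k"
  unfolding qfalling_def prod.lessThan_Suc_shift by simp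

lemma qpoch_eq_qfalling: "k \<le> n \<Longrightarrow> qpoch q q n = qpoch q q (n - k) * qfalling q n k"
proof (induction k)
  case (Suc k)
  then have "n - k = Suc (n - Suc k)"
    by simp
  with Suc show ?case
    by (simp add: qfalling_Suc qpoch_Suc algebra_simps)
qed simp

lemma qfalling_pascal:
  "qfalling q (Suc n) (Suc k)
     = q ^ Suc k * qfalling q n (Suc k) + (1 - q ^ Suc k) * qfalling q n k"
proof (cases "k \<le> n")
  case True
  then have split: "1 - q ^ Suc n = q ^ Suc k * (1 - q ^ (n - k)) + (1 - q ^ Suc k)"
    by (simp add: algebra_simps flip: power_add)
  show ?thesis
    unfolding qfalling_Suc_Suc qfalling_Suc[of q n k] split by (simp add: algebra_simps)
qed (simp add: qfalling_Suc_Suc qfalling_eq_0)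

lemma qfalling_pascal':
  "qfalling q (Suc n) (Suc k)
     = qfalling q n (Suc k) + q ^ (n - k) * (1 - q ^ Suc k) * qfalling q n k"
proof (cases "k \<le> n")
  case True
  then have split: "1 - q ^ Suc n = (1 - q ^ (n - k)) + q ^ (n - k) * (1 - q ^ Suc k)"
    by (simp add: algebra_simps flip: power_add)
  show ?thesis
    unfolding qfalling_Suc_Suc qfalling_Suc[of q n k] split by (simp add: algebra_simps)
qed (simp add: qfalling_Suc_Suc qfalling_eq_0)

lemma sum_qfalling_pascal:
  "(\<Sum>k\<le>Suc n. qfalling q (Suc n) k * T k)
     = (\<Sum>k\<le>n. qfalling q n k * (q ^ k * T k + (1 - q ^ Suc k) * T (Suc k)))"
proof -
  have "(\<Sum>k\<le>Suc n. qfalling q (Suc n) k * T k)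
      = T 0 + (\<Sum>k\<le>n. q ^ Suc k * qfalling q n (Suc k) * T (Suc k))
            + (\<Sum>k\<le>n. (1 - q ^ Suc k) * qfalling q n k * T (Suc k))"
    by (simp only: sum.atMost_Suc_shift qfalling_pascal)
      (simp add: sum.distrib[symmetric] algebra_simps)
  also have "T 0 + (\<Sum>k\<le>n. q ^ Suc k * qfalling q n (Suc k) * T (Suc k))
      = (\<Sum>k\<le>Suc n. q ^ k * qfalling q n k * T k)"
    by (simp only: sum.atMost_Suc_shift) simp
  also have "\<dots> = (\<Sum>k\<le>n. q ^ k * qfalling q n k * T k)"
    by (simp add: qfalling_eq_0)
  finally show ?thesis
    by (simp only: sum.distrib[symmetric] distrib_left mult_ac)
qed

lemma sum_qfalling_pascal':
  "(\<Sum>k\<le>Suc n. qfalling q (Suc n) k * T k)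
     = (\<Sum>k\<le>n. qfalling q n k * (T k + q ^ (n - k) * (1 - q ^ Suc k) * T (Suc k)))"
proof -
  have "(\<Sum>k\<le>Suc n. qfalling q (Suc n) k * T k)
      = T 0 + (\<Sum>k\<le>n. qfalling q n (Suc k) * T (Suc k))
            + (\<Sum>k\<le>n. q ^ (n - k) * (1 - q ^ Suc k) * qfalling q n k * T (Suc k))"
    by (simp only: sum.atMost_Suc_shift qfalling_pascal')
      (simp add: sum.distrib[symmetric] algebra_simps)
  also have "T 0 + (\<Sum>k\<le>n. qfalling q n (Suc k) * T (Suc k)) = (\<Sum>k\<le>Suc n. qfalling q n k * T k)"
    by (simp only: sum.atMost_Suc_shift) simp
  also have "\<dots> = (\<Sum>k\<le>n. qfalling q n k * T k)"
    by (simp add: qfalling_eq_0)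
  finally show ?thesis
    by (simp only: sum.distrib[symmetric] distrib_left mult_ac)
qed

text \<open>Unlike \<open>qbinom\<close>, whose \<open>n - k\<close> truncates, this Gaussian binomial vanishes for \<open>k > n\<close>.\<close>

definition qchoose :: "complex \<Rightarrow> nat \<Rightarrow> nat \<Rightarrow> complex" where
  "qchoose q n k = qfalling q n k / qpoch q q k"

lemma qchoose_0 [simp]: "qchoose q n 0 = 1"
  by (simp add: qchoose_def)

lemma qchoose_eq_0: "n < k \<Longrightarrow> qchoose q n k = 0"
  by (simp add: qchoose_def qfalling_eq_0)

lemma qchoose_eq_qbinom:
  assumes "\<And>m. qpoch q q m \<noteq> 0" and "k \<le> n"
  shows "qchoose q n k = qbinom q n k"
  using qpoch_eq_qfalling[OF assms(2)] assms(1)[of "n - k"]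
  by (simp add: qchoose_def qbinom_def)

lemma qbinom_mult_qpoch:
  assumes "\<And>m. qpoch q q m \<noteq> 0" and "k \<le> n"
  shows "qbinom q n k * qpoch q q k = qfalling q n k"
  using qchoose_eq_qbinom[OF assms] assms(1)[of k] by (simp add: qchoose_def field_simps)

lemma qchoose_pascal:
  assumes "qpoch q q (Suc k) \<noteq> 0"
  shows "qchoose q (Suc n) (Suc k) = q ^ Suc k * qchoose q n (Suc k) + qchoose q n k"
  using assms by (simp add: qchoose_def qfalling_pascal qpoch_Suc field_simps)

lemma qchoose_Suc_right:
  assumes "qpoch q q (Suc k) \<noteq> 0"
  shows "(1 - q ^ Suc k) * qchoose q n (Suc k) = qchoose q n k * (1 - q ^ (n - k))"
  using assms by (simp add: qchoose_def qfalling_Suc qpoch_Suc field_simps)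

lemma choose_two_add: "(i + j) choose 2 = (i choose 2) + (j choose 2) + i * j"
proof (induction j)
  case (Suc j)
  have "Suc m choose 2 = (m choose 2) + m" for m
    by (simp add: numeral_2_eq_2)
  with Suc show ?case
    by simp
qed simp

text \<open>The polynomial \<open>(-sX;q)_m\<close>; its coefficients are given by Cauchy's q-binomial theorem.\<close>

definition qpoch_fps :: "complex \<Rightarrow> nat \<Rightarrow> complex \<Rightarrow> complex fps" where
  "qpoch_fps q m s = (\<Prod>j<m. 1 + fps_const (s * q ^ j) * fps_X)"

lemma qpoch_fps_add: "qpoch_fps q (m + k) s = qpoch_fps q m s * qpoch_fps q k (s * q ^ m)"
  by (induction k) (simp_all add: qpoch_fps_def power_add mult.assoc)

lemma qpoch_fps_Suc_left:
  "qpoch_fps q (Suc m) s = (1 + fps_const s * fps_X) * qpoch_fps q m (s * q)"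
  using qpoch_fps_add[of q 1 m s] by (simp add: qpoch_fps_def)

lemma qpoch_fps_nth:
  assumes Q: "\<And>m. qpoch q q m \<noteq> 0"
  shows "qpoch_fps q m s $ k = qchoose q m k * q ^ (k choose 2) * s ^ k"
proof (induction m arbitrary: s k)
  case 0
  then show ?case
    by (cases k) (simp_all add: qpoch_fps_def qchoose_eq_0 numeral_2_eq_2)
next
  case (Suc m)
  show ?case
  proof (cases k)
    case 0
    then show ?thesis
      by (simp add: qpoch_fps_Suc_left Suc.IH numeral_2_eq_2)
  next
    case (Suc j)
    have "qpoch_fps q (Suc m) s $ Suc j
        = qpoch_fps q m (s * q) $ Suc j + s * qpoch_fps q m (s * q) $ j"
      by (simp add: qpoch_fps_Suc_left distrib_right mult.assoc)
    also have "\<dots> = (q ^ Suc j * qchoose q m (Suc j) + qchoose q m j)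
                    * q ^ (Suc j choose 2) * s ^ Suc j"
      by (simp add: Suc.IH numeral_2_eq_2 power_add algebra_simps)
    also have "\<dots> = qchoose q (Suc m) (Suc j) * q ^ (Suc j choose 2) * s ^ Suc j"
      using Q by (simp add: qchoose_pascal)
    finally show ?thesis
      using Suc by simp
  qed
qed

lemma qvandermonde:
  assumes Q: "\<And>m. qpoch q q m \<noteq> 0" and "q \<noteq> 0"
  shows "qchoose q (M + N) k
           = (\<Sum>i\<le>k. qchoose q M (k - i) * qchoose q N i * q ^ (i * (M - (k - i))))"
proof -
  have "qchoose q (M + N) k * q ^ (k choose 2) = qpoch_fps q (M + N) 1 $ k"
    by (simp add: qpoch_fps_nth[OF Q])
  also have "\<dots> = (qpoch_fps q N (q ^ M) * qpoch_fps q M 1) $ k"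
    using qpoch_fps_add[of q M N 1] by (simp add: ac_simps)
  also have "\<dots> = (\<Sum>i\<le>k. qchoose q N i * q ^ (i choose 2) * (q ^ M) ^ i
                          * (qchoose q M (k - i) * q ^ ((k - i) choose 2)))"
    by (simp add: fps_mult_nth qpoch_fps_nth[OF Q] atLeast0AtMost)
  also have "\<dots> = (\<Sum>i\<le>k. qchoose q M (k - i) * qchoose q N i * q ^ (i * (M - (k - i))))
                   * q ^ (k choose 2)"
    unfolding sum_distrib_right
  proof (rule sum.cong[OF refl])
    fix i assume "i \<in> {..k}"
    let ?pow = "q ^ (i choose 2) * (q ^ M) ^ i * q ^ ((k - i) choose 2)"
    show "qchoose q N i * q ^ (i choose 2) * (q ^ M) ^ i
            * (qchoose q M (k - i) * q ^ ((k - i) choose 2))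
        = qchoose q M (k - i) * qchoose q N i * q ^ (i * (M - (k - i))) * q ^ (k choose 2)"
    proof (cases "k - i \<le> M")
      case True
      have "(k choose 2) = (i choose 2) + ((k - i) choose 2) + i * (k - i)"
        using choose_two_add[of i "k - i"] \<open>i \<in> {..k}\<close> by simp
      moreover have "M * i = i * (k - i) + i * (M - (k - i))"
        using True by (simp add: mult.commute flip: add_mult_distrib2)
      ultimately have exps:
        "(i choose 2) + M * i + ((k - i) choose 2) = i * (M - (k - i)) + (k choose 2)"
        by simp
      then have pw: "?pow = q ^ (i * (M - (k - i))) * q ^ (k choose 2)"
        unfolding power_mult[symmetric] power_add[symmetric] by (simp only: exps)
      have "qchoose q N i * q ^ (i choose 2) * (q ^ M) ^ i
              * (qchoose q M (k - i) * q ^ ((k - i) choose 2))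
          = qchoose q M (k - i) * qchoose q N i * ?pow"
        by (simp only: ac_simps)
      then show ?thesis
        unfolding pw by (simp only: ac_simps)
    qed (simp add: qchoose_eq_0)
  qed
  finally show ?thesis
    using \<open>q \<noteq> 0\<close> by simp
qed

lemma qpoch_shift_up:
  assumes Q: "\<And>m. qpoch q q m \<noteq> 0"
  shows "qpoch (a * q ^ n) q L
           = (\<Sum>k\<le>n. qfalling q n k
                * (qchoose q L k * (q ^ (2 * (k choose 2)) * a ^ k) * qpoch (a * q ^ k) q (L - k)))"
proof (induction n arbitrary: a)
  case 0
  then show ?case
    by (simp add: numeral_2_eq_2)
next
  case (Suc n)
  define T where
    "T a k = qchoose q L k * (q ^ (2 * (k choose 2)) * a ^ k) * qpoch (a * q ^ k) q (L - k)" for a k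
  have step: "T (a * q) k = q ^ k * T a k + (1 - q ^ Suc k) * T a (Suc k)" for k
  proof -
    have contiguous: "qpoch (a * q * q ^ k) q (L - k)
        = qpoch (a * q ^ k) q (L - k)
          + a * q ^ k * (1 - q ^ (L - k)) * qpoch (a * q ^ Suc k) q (L - Suc k)"
      using qpoch_contiguous[of "a * q ^ k" q "L - k"] by (simp add: mult_ac)
    have "(1 - q ^ Suc k) * T a (Suc k)
        = ((1 - q ^ Suc k) * qchoose q L (Suc k))
          * (q ^ (2 * (Suc k choose 2)) * a ^ Suc k) * qpoch (a * q ^ Suc k) q (L - Suc k)"
      by (simp add: T_def mult_ac)
    also have "\<dots> = qchoose q L k * (1 - q ^ (L - k))
          * (q ^ (2 * (Suc k choose 2)) * a ^ Suc k) * qpoch (a * q ^ Suc k) q (L - Suc k)"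
      by (simp only: qchoose_Suc_right[OF Q])
    finally have tail: "(1 - q ^ Suc k) * T a (Suc k) = \<dots>" .
    show ?thesis
      unfolding tail unfolding T_def contiguous
      by (simp add: numeral_2_eq_2 power_add algebra_simps)
  qed
  have "qpoch (a * q ^ Suc n) q L = qpoch ((a * q) * q ^ n) q L"
    by (simp add: mult_ac)
  also have "\<dots> = (\<Sum>k\<le>n. qfalling q n k * T (a * q) k)"
    unfolding T_def by (rule Suc.IH)
  also have "\<dots> = (\<Sum>k\<le>Suc n. qfalling q (Suc n) k * T a k)"
    unfolding step sum_qfalling_pascal ..
  finally show ?case
    unfolding T_def .
qed

lemma qpoch_shift_down:
  assumes Q: "\<And>m. qpoch q q m \<noteq> 0"
  shows "qpoch a q L
           = (\<Sum>k\<le>n. qfalling q n k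
                * (qchoose q L k * (q ^ (k choose 2) * (- a) ^ k) * qpoch (a * q ^ n) q (L - k)))"
proof (induction n)
  case 0
  then show ?case
    by (simp add: numeral_2_eq_2)
next
  case (Suc n)
  define T where
    "T n k = qchoose q L k * (q ^ (k choose 2) * (- a) ^ k) * qpoch (a * q ^ n) q (L - k)" for n k
  have step: "T n k = T (Suc n) k + q ^ (n - k) * (1 - q ^ Suc k) * T (Suc n) (Suc k)"
    if "k \<le> n" for k
  proof -
    have contiguous: "qpoch (a * q ^ Suc n) q (L - k)
        = qpoch (a * q ^ n) q (L - k)
          + a * q ^ n * (1 - q ^ (L - k)) * qpoch (a * q ^ Suc n) q (L - Suc k)"
      using qpoch_contiguous[of "a * q ^ n" q "L - k"] by (simp add: mult_ac)
    have "q ^ (n - k) * (1 - q ^ Suc k) * T (Suc n) (Suc k)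
        = ((1 - q ^ Suc k) * qchoose q L (Suc k))
          * (q ^ (n - k) * q ^ (Suc k choose 2) * (- a) ^ Suc k)
          * qpoch (a * q ^ Suc n) q (L - Suc k)"
      by (simp add: T_def mult_ac)
    also have "\<dots> = qchoose q L k * (1 - q ^ (L - k))
          * (q ^ (n - k) * q ^ (Suc k choose 2) * (- a) ^ Suc k)
          * qpoch (a * q ^ Suc n) q (L - Suc k)"
      by (simp only: qchoose_Suc_right[OF Q])
    finally have tail: "q ^ (n - k) * (1 - q ^ Suc k) * T (Suc n) (Suc k) = \<dots>" .
    have "q ^ n = q ^ (n - k) * q ^ k"
      using that by (simp flip: power_add)
    then show ?thesis
      unfolding tail unfolding T_def contiguous
      by (simp add: numeral_2_eq_2 power_add algebra_simps)
  qed
  have "qpoch a q L = (\<Sum>k\<le>n. qfalling q n k * T n k)"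
    unfolding T_def by (rule Suc.IH)
  also have "\<dots> = (\<Sum>k\<le>n. qfalling q n k
                     * (T (Suc n) k + q ^ (n - k) * (1 - q ^ Suc k) * T (Suc n) (Suc k)))"
    by (rule sum.cong) (simp_all add: step)
  also have "\<dots> = (\<Sum>k\<le>Suc n. qfalling q (Suc n) k * T (Suc n) k)"
    unfolding sum_qfalling_pascal' ..
  finally show ?case
    unfolding T_def .
qed

lemma qpoch_shift_down_powi:
  assumes Q: "\<And>m. qpoch q q m \<noteq> 0" and "q \<noteq> 0"
  shows "qpoch (a * q powi (- int n)) q L
           = (\<Sum>k\<le>n. qfalling q n k
                * (qchoose q L k * (q powi (int (k choose 2) - int n * int k) * (- a) ^ k)
                   * qpoch a q (L - k)))"
proof -
  define a' where "a' = a * q powi (- int n)"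
  have a': "a' * q ^ n = a"
    using \<open>q \<noteq> 0\<close> by (simp add: a'_def power_int_minus)
  have weight:
    "q ^ (k choose 2) * (- a') ^ k = q powi (int (k choose 2) - int n * int k) * (- a) ^ k" for k
  proof -
    have "- a' = - a / q ^ n"
      by (simp add: a'_def power_int_minus divide_inverse)
    then have "(- a') ^ k = (- a) ^ k / q ^ (n * k)"
      by (simp only: power_divide power_mult)
    moreover have "q powi (int (k choose 2) - int n * int k) = q ^ (k choose 2) / q ^ (n * k)"
      using \<open>q \<noteq> 0\<close> by (simp add: power_int_diff flip: of_nat_mult)
    ultimately show ?thesis
      by simp
  qed
  show ?thesis
    using qpoch_shift_down[OF Q, of a' L n] unfolding a'_def [symmetric] by (simp only: weight a')
qed

lemma Phi4_nth:
  "Phi4 q a b c c' u v $ m $ n = qpoch a q (m + n) * qpoch b q (m + n)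
      / (qpoch q q m * qpoch q q n * qpoch c q m * qpoch c' q n) * u ^ m * v ^ n"
  by (simp add: Phi4_def)

lemma fps2_monomial_mult_nth:
  "(fpsC2 s * fpsX2 ^ j * fpsY2 ^ i * F) $ M $ N
     = (if j \<le> M \<and> i \<le> N then s * F $ (M - j) $ (N - i) else 0)"
proof -
  have "fpsC2 s * fpsX2 ^ j * fpsY2 ^ i * F
      = fps_const (fps_const s) * (fps_X ^ j * (fps_const (fps_X ^ i) * F))"
    by (simp add: mult_ac)
  then show ?thesis
    unfolding \<open>fpsC2 s * fpsX2 ^ j * fpsY2 ^ i * F = _\<close> by (simp add: fps_X_power_mult_nth)
qed

lemma Phi4_shifted_term_nth:
  assumes Q: "\<And>m. qpoch q q m \<noteq> 0"
    and C: "\<And>m. qpoch c q m \<noteq> 0" and C': "\<And>m. qpoch c' q m \<noteq> 0" and "i \<le> k"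
  shows "(fpsC2 (qbinom q k i * qpoch b q k / (qpoch c q (k - i) * qpoch c' q i))
            * fpsX2 ^ (k - i) * fpsY2 ^ i
            * Phi4 q \<alpha> (b * q ^ k) (c * q ^ (k - i)) (c' * q ^ i) (q ^ i) 1) $ M $ N
         = qpoch b q (M + N) / (qpoch q q M * qpoch q q N * qpoch c q M * qpoch c' q N)
           * qpoch q q k * qpoch \<alpha> q (M + N - k)
           * (qchoose q M (k - i) * qchoose q N i * q ^ (i * (M - (k - i))))"
proof (cases "k - i \<le> M \<and> i \<le> N")
  case True
  define m where "m = M - (k - i)"
  define n' where "n' = N - i"
  have L: "M + N - k = m + n'" and MN: "M + N = k + (m + n')"
    and M: "M = (k - i) + m" and N: "N = i + n'"
    using True \<open>i \<le> k\<close> by (auto simp: m_def n'_def)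
  have b: "qpoch b q (M + N) = qpoch b q k * qpoch (b * q ^ k) q (m + n')"
    by (subst MN) (rule qpoch_add)
  have c: "qpoch c q M = qpoch c q (k - i) * qpoch (c * q ^ (k - i)) q m"
    by (subst M) (rule qpoch_add)
  have c': "qpoch c' q N = qpoch c' q i * qpoch (c' * q ^ i) q n'"
    by (subst N) (rule qpoch_add)
  have choose_M: "qchoose q M (k - i) = qpoch q q M / (qpoch q q (k - i) * qpoch q q m)"
    using qchoose_eq_qbinom[OF Q] True by (simp add: qbinom_def m_def)
  have choose_N: "qchoose q N i = qpoch q q N / (qpoch q q i * qpoch q q n')"
    using qchoose_eq_qbinom[OF Q] True by (simp add: qbinom_def n'_def)
  have "qpoch (c * q ^ (k - i)) q m \<noteq> 0" "qpoch (c' * q ^ i) q n' \<noteq> 0"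
    using qpoch_shift_nonzero C C' by blast+
  with True Q C C' show ?thesis
    unfolding fps2_monomial_mult_nth Phi4_nth L b c c' choose_M choose_N
    by (simp add: qbinom_def power_mult m_def [symmetric] n'_def [symmetric] field_simps)
next
  case False
  then show ?thesis
    unfolding fps2_monomial_mult_nth by (auto simp: qchoose_eq_0)
qed

lemma Phi4_shifted_sum_nth:
  assumes Q: "\<And>m. qpoch q q m \<noteq> 0" and "q \<noteq> 0"
    and C: "\<And>m. qpoch c q m \<noteq> 0" and C': "\<And>m. qpoch c' q m \<noteq> 0"
  shows "(\<Sum>i\<le>k. fpsC2 (qbinom q k i * qpoch b q k / (qpoch c q (k - i) * qpoch c' q i))
            * fpsX2 ^ (k - i) * fpsY2 ^ i
            * Phi4 q \<alpha> (b * q ^ k) (c * q ^ (k - i)) (c' * q ^ i) (q ^ i) 1) $ M $ N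
         = qpoch b q (M + N) / (qpoch q q M * qpoch q q N * qpoch c q M * qpoch c' q N)
           * qpoch q q k * qpoch \<alpha> q (M + N - k)
           * qchoose q (M + N) k"
    (is "?sum $ M $ N = ?factor * _")
proof -
  have "?sum $ M $ N
      = (\<Sum>i\<le>k. ?factor * (qchoose q M (k - i) * qchoose q N i * q ^ (i * (M - (k - i)))))"
    unfolding fps_sum_nth by (rule sum.cong[OF refl], rule Phi4_shifted_term_nth[OF Q C C']) simp
  then show ?thesis
    by (simp only: qvandermonde[OF Q \<open>q \<noteq> 0\<close>] sum_distrib_left)
qed

lemma Phi4_expansion:
  assumes Q: "\<And>m. qpoch q q m \<noteq> 0" and "q \<noteq> 0"
    and C: "\<And>m. qpoch c q m \<noteq> 0" and C': "\<And>m. qpoch c' q m \<noteq> 0"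
    and expansion: "\<And>L. qpoch \<alpha> q L
                     = (\<Sum>k\<le>n. qfalling q n k * (qchoose q L k * w k * qpoch (A k) q (L - k)))"
  shows "Phi4 q \<alpha> b c c' 1 1 =
           (\<Sum>k\<le>n. \<Sum>i\<le>k.
              fpsC2 (qbinom q n k * qbinom q k i * qpoch b q k
                     / (qpoch c q (k - i) * qpoch c' q i) * w k)
              * fpsX2 ^ (k - i) * fpsY2 ^ i
              * Phi4 q (A k) (b * q ^ k) (c * q ^ (k - i)) (c' * q ^ i) (q ^ i) 1)"
    (is "_ = (\<Sum>k\<le>n. \<Sum>i\<le>k. ?term k i)")
proof (rule fps_ext, rule fps_ext)
  fix M N
  define P where "P = qpoch b q (M + N) / (qpoch q q M * qpoch q q N * qpoch c q M * qpoch c' q N)"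
  have term_coeff: "?term k i $ M $ N = qbinom q n k * w k
          * (fpsC2 (qbinom q k i * qpoch b q k / (qpoch c q (k - i) * qpoch c' q i))
             * fpsX2 ^ (k - i) * fpsY2 ^ i
             * Phi4 q (A k) (b * q ^ k) (c * q ^ (k - i)) (c' * q ^ i) (q ^ i) 1) $ M $ N" for k i
    unfolding fps2_monomial_mult_nth by simp
  have "(\<Sum>k\<le>n. \<Sum>i\<le>k. ?term k i) $ M $ N
      = (\<Sum>k\<le>n. qbinom q n k * w k
          * (\<Sum>i\<le>k. fpsC2 (qbinom q k i * qpoch b q k / (qpoch c q (k - i) * qpoch c' q i))
             * fpsX2 ^ (k - i) * fpsY2 ^ i
             * Phi4 q (A k) (b * q ^ k) (c * q ^ (k - i)) (c' * q ^ i) (q ^ i) 1) $ M $ N)"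
    by (simp only: fps_sum_nth term_coeff sum_distrib_left)
  also have "\<dots> = (\<Sum>k\<le>n. qbinom q n k * w k
                     * (P * qpoch q q k * qpoch (A k) q (M + N - k) * qchoose q (M + N) k))"
    by (simp only: Phi4_shifted_sum_nth[OF Q \<open>q \<noteq> 0\<close> C C'] P_def)
  also have "\<dots> = P * (\<Sum>k\<le>n. qfalling q n k
                         * (qchoose q (M + N) k * w k * qpoch (A k) q (M + N - k)))"
    unfolding sum_distrib_left
    by (rule sum.cong[OF refl]) (simp add: qbinom_mult_qpoch[OF Q, symmetric] mult_ac)
  also have "\<dots> = P * qpoch \<alpha> q (M + N)"
    by (simp only: expansion)
  also have "\<dots> = Phi4 q \<alpha> b c c' 1 1 $ M $ N"
    by (simp add: Phi4_nth P_def)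
  finally show "Phi4 q \<alpha> b c c' 1 1 $ M $ N = (\<Sum>k\<le>n. \<Sum>i\<le>k. ?term k i) $ M $ N"
    by simp
qed

theorem theorem15:
  fixes q a b c c' :: complex and n :: nat
  assumes "0 < norm q" and "norm q < 1"
    and "\<And>j. c * q ^ j \<noteq> 1" and "\<And>j. c' * q ^ j \<noteq> 1"
  shows "(Phi4 q (a * q ^ n) b c c' 1 1 =
           (\<Sum>k\<le>n. \<Sum>i\<le>k.
              fpsC2 (qbinom q n k * qbinom q k i * qpoch b q k
                     / (qpoch c q (k - i) * qpoch c' q i)
                     * q ^ (2 * (k choose 2)) * a ^ k)
              * fpsX2 ^ (k - i) * fpsY2 ^ i
              * Phi4 q (a * q ^ k) (b * q ^ k) (c * q ^ (k - i)) (c' * q ^ i) (q ^ i) 1))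
       \<and> (Phi4 q (a * q powi (- int n)) b c c' 1 1 =
           (\<Sum>k\<le>n. \<Sum>i\<le>k.
              fpsC2 (qbinom q n k * qbinom q k i * qpoch b q k
                     / (qpoch c q (k - i) * qpoch c' q i)
                     * q powi (int (k choose 2) - int n * int k) * (- a) ^ k)
              * fpsX2 ^ (k - i) * fpsY2 ^ i
              * Phi4 q a (b * q ^ k) (c * q ^ (k - i)) (c' * q ^ i) (q ^ i) 1))"
proof -
  have q0: "q \<noteq> 0"
    using assms(1) by auto
  have Q: "\<And>m. qpoch q q m \<noteq> 0"
    using assms(2) by (rule qpoch_q_nonzero)
  have C: "\<And>m. qpoch c q m \<noteq> 0"
    using assms(3) by (rule qpoch_nonzero)
  have C': "\<And>m. qpoch c' q m \<noteq> 0"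
    using assms(4) by (rule qpoch_nonzero)
  show ?thesis
    using Phi4_expansion[OF Q q0 C C' qpoch_shift_up[OF Q, of a n], of b]
      Phi4_expansion[OF Q q0 C C' qpoch_shift_down_powi[OF Q q0, of a n], of b]
    by (simp only: mult.assoc)
qed

end
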